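(* Let $v:\mathcal{X}\times\{\theta_1,\ldots,\theta_M\}\to[0,\infty)$ be measurable with ${\rm E}\big[\sum_{i=1}^M P(\theta_i|\mathbf{x})\,v(\mathbf{x},\theta_i)\big]<\infty$. Then the quantity ${\rm E}\big[u_{\hat\theta}(\mathbf{x},\theta)\,v(\mathbf{x},\theta)\big]$ takes the same value for every detector $\hat\theta$ if and only if there exists a measurable function $\zeta:\mathcal{X}\to[0,\infty)$ such that, for almost every $\mathbf{x}$, $$v(\mathbf{x},\theta_i)=\frac{\zeta(\mathbf{x})}{P(\theta_i|\mathbf{x})},\qquad i=1,\ldots,M .$$ In that case ${\rm E}[u_{\hat\theta}(\mathbf{x},\theta)v(\mathbf{x},\theta)]=(M-1)\,{\rm E}[\zeta(\mathbf{x})]$ for every detector $\hat\theta$.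
   Context: $M$-ary hypothesis testing: the true hypothesis $\theta$ is a random variable taking values in $\{\theta_1,\ldots,\theta_M\}$ with prior probabilities $P(\theta_i)$, and $\mathbf{x}$ is a random observation with values in a measurable space $\mathcal{X}$. $P(\theta_i|\mathbf{x})$ denotes the posterior probability of $\theta_i$ given $\mathbf{x}$; it is assumed that $P(\theta_i|\mathbf{x})>0$ for all $\mathbf{x}$ and all $i$. A detector is a measurable map $\hat\theta:\mathcal{X}\to\{\theta_1,\ldots,\theta_M\}$. For a detector $\hat\theta$, $u_{\hat\theta}(\mathbf{x},\theta)=\mathbf{1}_{\hat\theta(\mathbf{x})\neq\theta}$ (equal to $1$ if $\hat\theta(\mathbf{x})\neq\theta$ and $0$ otherwise). All expectations are with respect to the joint law of $(\mathbf{x},\theta)$. *)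

theory Defs
  imports "HOL-Probability.Probability"
begin

text \<open>Hypotheses theta_1..theta_M are encoded as indices 0..<m.
  The joint law of (x, theta) is given by the marginal law M of x
  (a probability measure on the observation space) together with the
  posterior kernel p i x = P(theta_i | x).\<close>

definition joint_expectation ::
  "'a measure \<Rightarrow> nat \<Rightarrow> (nat \<Rightarrow> 'a \<Rightarrow> real) \<Rightarrow> ('a \<Rightarrow> nat \<Rightarrow> real) \<Rightarrow> real" where
  "joint_expectation M m p f = (\<integral>x. (\<Sum>i<m. p i x * f x i) \<partial>M)"

definition detector :: "'a measure \<Rightarrow> nat \<Rightarrow> ('a \<Rightarrow> nat) \<Rightarrow> bool" where
  "detector M m d \<longleftrightarrow> d \<in> measurable M (count_space UNIV) \<and> (\<forall>x\<in>space M. d x < m)"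

definition err_ind :: "('a \<Rightarrow> nat) \<Rightarrow> 'a \<Rightarrow> nat \<Rightarrow> real" where
  "err_ind d x i = (if d x \<noteq> i then 1 else 0)"

end

theory Submission
  imports Defs
begin

text \<open>
  Write w i x = P(theta_i | x) v(x, theta_i) for the posterior-weighted cost.  For a detector d
  the integrand of the weighted error probability is, pointwise,
  sum_i w i x - w (d x) x, so the weighted error equals E[sum_i w i] - E[w (d x) x].
  Hence the weighted error is the same for every detector iff E[w (d x) x] is.
  Comparing the detector that picks the larger of w i, w j with the constant detector j shows
  that constancy forces w i <= w j almost everywhere for all i, j, i.e. all w i agree a.e.
  with a common function zeta, which is the claimed representation v = zeta / p.  Conversely,
  under that representation the integrand is (m - 1) zeta x for every detector.
\<close>

lemma sum_indicator_neq:
  fixes f :: "nat \<Rightarrow> real"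
  assumes "a < m"
  shows "(\<Sum>k<m. (if a \<noteq> k then 1 else 0) * f k) = (\<Sum>k<m. f k) - f a"
proof -
  have "(\<Sum>k<m. (if a \<noteq> k then 1 else 0) * f k) = (\<Sum>k<m. f k - (if a = k then f k else 0))"
    by (rule sum.cong) auto
  also have "\<dots> = (\<Sum>k<m. f k) - f a"
    using assms by (simp add: sum_subtractf)
  finally show ?thesis .
qed

lemma err_ind_weighted_sum:
  assumes "d x < m"
  shows "(\<Sum>i<m. p i x * (err_ind d x i * g x i))
           = (\<Sum>i<m. p i x * g x i) - p (d x) x * g x (d x)"
  using sum_indicator_neq[OF assms, of "\<lambda>i. p i x * g x i"]
  by (simp add: err_ind_def mult.left_commute)

lemma integral_eq_imp_AE_eq:
  fixes f g :: "'a \<Rightarrow> real"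
  assumes f: "integrable M f" and g: "integrable M g"
    and le: "AE x in M. f x \<le> g x" and eq: "(\<integral>x. f x \<partial>M) = (\<integral>x. g x \<partial>M)"
  shows "AE x in M. f x = g x"
proof -
  have "(\<integral>x. g x - f x \<partial>M) = 0"
    using eq by (simp add: Bochner_Integration.integral_diff[OF g f])
  moreover have "AE x in M. 0 \<le> g x - f x"
    using le by eventually_elim simp
  ultimately have "AE x in M. g x - f x = 0"
    using integral_nonneg_eq_0_iff_AE[OF Bochner_Integration.integrable_diff[OF g f]] by blast
  then show ?thesis by eventually_elim simp
qed

locale weighted_error =
  fixes M :: "'a measure" and m :: nat
    and p :: "nat \<Rightarrow> 'a \<Rightarrow> real" and v :: "'a \<Rightarrow> nat \<Rightarrow> real"
  assumes p_meas: "\<And>i. i < m \<Longrightarrow> p i \<in> borel_measurable M"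
    and p_pos: "\<And>i x. i < m \<Longrightarrow> x \<in> space M \<Longrightarrow> p i x > 0"
    and v_meas: "\<And>i. i < m \<Longrightarrow> (\<lambda>x. v x i) \<in> borel_measurable M"
    and v_nonneg: "\<And>x i. x \<in> space M \<Longrightarrow> i < m \<Longrightarrow> v x i \<ge> 0"
    and v_int: "integrable M (\<lambda>x. \<Sum>i<m. p i x * v x i)"
begin

definition w :: "nat \<Rightarrow> 'a \<Rightarrow> real" where
  "w i x = p i x * v x i"

definition risk :: "('a \<Rightarrow> nat) \<Rightarrow> real" where
  "risk d = joint_expectation M m p (\<lambda>x i. err_ind d x i * v x i)"

definition inverse_posterior :: "('a \<Rightarrow> real) \<Rightarrow> bool" where
  "inverse_posterior \<zeta> \<longleftrightarrow> \<zeta> \<in> borel_measurable M \<and> (\<forall>x\<in>space M. \<zeta> x \<ge> 0) \<and>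
     (AE x in M. \<forall>i<m. v x i = \<zeta> x / p i x)"

lemma w_meas: "i < m \<Longrightarrow> w i \<in> borel_measurable M"
  unfolding w_def using p_meas v_meas by measurable

lemma w_nonneg: "i < m \<Longrightarrow> x \<in> space M \<Longrightarrow> w i x \<ge> 0"
  unfolding w_def using p_pos v_nonneg by (simp add: less_imp_le)

lemma w_le_sum: "i < m \<Longrightarrow> x \<in> space M \<Longrightarrow> w i x \<le> (\<Sum>k<m. w k x)"
  using w_nonneg by (intro member_le_sum) auto

lemma sum_w_integrable: "integrable M (\<lambda>x. \<Sum>k<m. w k x)"
  using v_int by (simp add: w_def)

lemma selected_w_integrable:
  assumes d: "detector M m d"
  shows "integrable M (\<lambda>x. w (d x) x)"
proof -
  have dm: "d \<in> measurable M (count_space UNIV)" and dlt: "\<And>x. x \<in> space M \<Longrightarrow> d x < m"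
    using d unfolding detector_def by auto
  have "(\<lambda>x. if d x = i then 1 else 0 :: real) \<in> borel_measurable M" for i
    using measurable_compose[OF dm, of "\<lambda>n. if n = i then 1 else 0" borel] by simp
  then have "(\<lambda>x. \<Sum>i<m. (if d x = i then 1 else 0) * w i x) \<in> borel_measurable M"
    using w_meas by (intro borel_measurable_sum borel_measurable_times) auto
  moreover have "(\<Sum>i<m. (if d x = i then 1 else 0) * w i x) = w (d x) x" if "x \<in> space M" for x
    using dlt[OF that] by (simp add: if_distrib[of "\<lambda>c. c * _"] cong: if_cong)
  ultimately have meas: "(\<lambda>x. w (d x) x) \<in> borel_measurable M"
    by (metis (no_types, lifting) measurable_cong)
  have "norm (w (d x) x) \<le> norm (\<Sum>k<m. w k x)" if "x \<in> space M" for x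
    using w_nonneg[OF dlt[OF that] that] w_le_sum[OF dlt[OF that] that] by simp
  then show ?thesis
    by (intro Bochner_Integration.integrable_bound[OF sum_w_integrable meas] AE_I2)
qed

lemma risk_eq_integral:
  assumes d: "detector M m d"
  shows "risk d = (\<integral>x. (\<Sum>k<m. w k x) - w (d x) x \<partial>M)"
  unfolding risk_def joint_expectation_def
  using d err_ind_weighted_sum[of d _ m p v]
  by (intro Bochner_Integration.integral_cong) (auto simp: detector_def w_def)

lemma risk_eq:
  assumes d: "detector M m d"
  shows "risk d = (\<integral>x. (\<Sum>k<m. w k x) \<partial>M) - (\<integral>x. w (d x) x \<partial>M)"
  using risk_eq_integral[OF d]
  by (simp add: Bochner_Integration.integral_diff[OF sum_w_integrable selected_w_integrable[OF d]])

text \<open>If all detectors have the same weighted error, any two weighted costs are ordered a.e.: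
  choosing the larger of w i and w j does no better than always choosing j.\<close>
lemma constant_risk_AE_le:
  assumes const: "\<forall>d. detector M m d \<longrightarrow> risk d = c" and ij: "i < m" "j < m"
  shows "AE x in M. w i x \<le> w j x"
proof -
  have [measurable]: "w i \<in> borel_measurable M" "w j \<in> borel_measurable M"
    using w_meas ij by auto
  define d where "d x = (if w i x > w j x then i else j)" for x
  have "d \<in> measurable M (count_space UNIV)"
    unfolding d_def by measurable
  then have det_d: "detector M m d"
    using ij unfolding detector_def d_def by auto
  have det_j: "detector M m (\<lambda>_. j)"
    using ij unfolding detector_def by auto
  have d_max: "w (d x) x = max (w i x) (w j x)" for x
    unfolding d_def by (auto simp: max_def)
  have "(\<integral>x. w (d x) x \<partial>M) = (\<integral>x. w j x \<partial>M)"
    using risk_eq[OF det_d] risk_eq[OF det_j] const det_d det_j by simp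
  then have "AE x in M. w j x = w (d x) x"
    using selected_w_integrable[OF det_j] selected_w_integrable[OF det_d]
    by (intro integral_eq_imp_AE_eq) (auto simp: d_max)
  then show ?thesis
    by eventually_elim (simp add: d_max)
qed

lemma constant_risk_imp_inverse_posterior:
  assumes const: "\<forall>d. detector M m d \<longrightarrow> risk d = c"
  shows "\<exists>\<zeta>. inverse_posterior \<zeta>"
proof (cases "m = 0")
  case True
  show ?thesis
    unfolding inverse_posterior_def using True by (intro exI[of _ "\<lambda>_. 0"]) simp
next
  case False
  then have m0: "0 < m" by simp
  have "AE x in M. \<forall>i\<in>{..<m}. w i x = w 0 x"
  proof (rule AE_finite_allI)
    fix i assume "i \<in> {..<m}"
    then have "i < m" by simp
    from constant_risk_AE_le[OF const this m0] constant_risk_AE_le[OF const m0 this]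
    show "AE x in M. w i x = w 0 x" by eventually_elim simp
  qed simp
  then have "AE x in M. \<forall>i<m. v x i = w 0 x / p i x"
    using AE_space
  proof eventually_elim
    case (elim x)
    show ?case
    proof (intro allI impI)
      fix i assume i: "i < m"
      have "p i x \<noteq> 0" using p_pos[OF i elim(2)] by simp
      then have "v x i = w i x / p i x" by (simp add: w_def)
      moreover have "w i x = w 0 x" using elim(1) i by blast
      ultimately show "v x i = w 0 x / p i x" by simp
    qed
  qed
  then show ?thesis
    using w_meas[OF m0] w_nonneg[OF m0]
    by (intro exI[of _ "w 0"]) (simp add: inverse_posterior_def)
qed

text \<open>Under the representation every weighted cost w i equals zeta a.e., so every detector
  has weighted error E[m zeta - zeta] = (m - 1) E[zeta].\<close>
lemma inverse_posterior_risk: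
  assumes \<zeta>: "inverse_posterior \<zeta>" and d: "detector M m d"
  shows "risk d = (real m - 1) * (\<integral>x. \<zeta> x \<partial>M)"
proof -
  have dlt: "\<And>x. x \<in> space M \<Longrightarrow> d x < m"
    using d unfolding detector_def by auto
  have \<zeta>_meas: "\<zeta> \<in> borel_measurable M" and \<zeta>_AE: "AE x in M. \<forall>i<m. v x i = \<zeta> x / p i x"
    using \<zeta> unfolding inverse_posterior_def by auto
  have "AE x in M. \<forall>i<m. w i x = \<zeta> x"
    using \<zeta>_AE AE_space
  proof eventually_elim
    case (elim x)
    show ?case
      using elim p_pos[of _ x] by (auto simp: w_def less_imp_neq[THEN not_sym])
  qed
  then have "AE x in M. (\<Sum>k<m. w k x) - w (d x) x = (real m - 1) * \<zeta> x"
    using AE_space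
  proof eventually_elim
    case (elim x)
    have "(\<Sum>k<m. w k x) = real m * \<zeta> x"
      using elim(1) by simp
    then show ?case
      using elim(1) dlt[OF elim(2)] by (simp add: algebra_simps)
  qed
  moreover have "(\<lambda>x. (\<Sum>k<m. w k x) - w (d x) x) \<in> borel_measurable M"
    using sum_w_integrable selected_w_integrable[OF d] by measurable
  ultimately have "risk d = (\<integral>x. (real m - 1) * \<zeta> x \<partial>M)"
    unfolding risk_eq_integral[OF d] using \<zeta>_meas by (intro integral_cong_AE) auto
  then show ?thesis by simp
qed

end

theorem theorem1:
  fixes M :: "'a measure" and m :: nat
    and p :: "nat \<Rightarrow> 'a \<Rightarrow> real" and v :: "'a \<Rightarrow> nat \<Rightarrow> real"
  assumes "prob_space M"
    and p_meas: "\<And>i. i < m \<Longrightarrow> p i \<in> borel_measurable M"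
    and p_pos: "\<And>i x. i < m \<Longrightarrow> x \<in> space M \<Longrightarrow> p i x > 0"
    and p_sum: "\<And>x. x \<in> space M \<Longrightarrow> (\<Sum>i<m. p i x) = 1"
    and v_meas: "\<And>i. i < m \<Longrightarrow> (\<lambda>x. v x i) \<in> borel_measurable M"
    and v_nonneg: "\<And>x i. x \<in> space M \<Longrightarrow> i < m \<Longrightarrow> v x i \<ge> 0"
    and v_int: "integrable M (\<lambda>x. \<Sum>i<m. p i x * v x i)"
  shows "((\<exists>c. \<forall>d. detector M m d \<longrightarrow>
              joint_expectation M m p (\<lambda>x i. err_ind d x i * v x i) = c)
          \<longleftrightarrow>
          (\<exists>\<zeta>. \<zeta> \<in> borel_measurable M \<and> (\<forall>x\<in>space M. \<zeta> x \<ge> 0) \<and>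
               (AE x in M. \<forall>i<m. v x i = \<zeta> x / p i x)))
       \<and>
       (\<forall>\<zeta>. \<zeta> \<in> borel_measurable M \<and> (\<forall>x\<in>space M. \<zeta> x \<ge> 0) \<and>
               (AE x in M. \<forall>i<m. v x i = \<zeta> x / p i x) \<longrightarrow>
            (\<forall>d. detector M m d \<longrightarrow>
               joint_expectation M m p (\<lambda>x i. err_ind d x i * v x i)
                 = (real m - 1) * (\<integral>x. \<zeta> x \<partial>M)))"
proof -
  interpret weighted_error M m p v
    using p_meas p_pos v_meas v_nonneg v_int by unfold_locales
  have "(\<exists>c. \<forall>d. detector M m d \<longrightarrow> risk d = c) \<longleftrightarrow> (\<exists>\<zeta>. inverse_posterior \<zeta>)"
    using constant_risk_imp_inverse_posterior inverse_posterior_risk by blast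
  then show ?thesis
    using inverse_posterior_risk unfolding risk_def inverse_posterior_def by blast
qed

end
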